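(* Let $(X,d)$ be a metric space and $o\in X$ a point. If $X$ admits a conical bicombing $\phi$, then the metric space $(\mathrm{CBI}(X),D_o)$ admits a conical bicombing $\Phi$ such that the subset $\mathrm{RCBI}(X)\subset\mathrm{CBI}(X)$ of all reversible conical bicombings on $X$ is $\Phi$-convex.
   Context: A bicombing on a metric space $(Y,d)$ is a map $\sigma\colon Y\times Y\times[0,1]\to Y$ such that each $\sigma_{xy}:=\sigma(x,y,\cdot)$ is a geodesic from $x$ to $y$ ($\sigma_{xy}(0)=x$, $\sigma_{xy}(1)=y$, $d(\sigma_{xy}(s),\sigma_{xy}(t))=|s-t|d(x,y)$); it is conical if $d(\sigma_{xy}(t),\sigma_{x'y'}(t))\le(1-t)d(x,x')+t\,d(y,y')$ for all $x,y,x',y'$, $t\in[0,1]$, and reversible if $\sigma_{xy}(t)=\sigma_{yx}(1-t)$. $\mathrm{CBI}(X)$ is the set of all conical bicombings on $X$, with metric $D_o(\sigma,\tau):=\sup\{3^{-k}d(\sigma_{xy}(t),\tau_{xy}(t)) : k\ge 0,\ x,y\in B_{2^k}(o),\ t\in[0,1]\}$, where $B_r(o)$ is the ball of radius $r$ about $o$. A subset $A$ of $\mathrm{CBI}(X)$ is $\Phi$-convex if $\Phi(\sigma,\tau,t)\in A$ for all $\sigma,\tau\in A$, $t\in[0,1]$. *)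

theory Defs
  imports "HOL-Analysis.Analysis"
begin

definition geodesic_on :: "'b set \<Rightarrow> ('b \<Rightarrow> 'b \<Rightarrow> real) \<Rightarrow> 'b \<Rightarrow> 'b \<Rightarrow> (real \<Rightarrow> 'b) \<Rightarrow> bool" where
  "geodesic_on Y d x y g \<longleftrightarrow> g 0 = x \<and> g 1 = y \<and>
     (\<forall>s\<in>{0..1}. g s \<in> Y) \<and>
     (\<forall>s\<in>{0..1}. \<forall>t\<in>{0..1}. d (g s) (g t) = \<bar>s - t\<bar> * d x y)"

definition bicombing_on :: "'b set \<Rightarrow> ('b \<Rightarrow> 'b \<Rightarrow> real) \<Rightarrow> ('b \<Rightarrow> 'b \<Rightarrow> real \<Rightarrow> 'b) \<Rightarrow> bool" where
  "bicombing_on Y d \<sigma> \<longleftrightarrow> (\<forall>x\<in>Y. \<forall>y\<in>Y. geodesic_on Y d x y (\<sigma> x y))"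

definition conical_bicombing_on :: "'b set \<Rightarrow> ('b \<Rightarrow> 'b \<Rightarrow> real) \<Rightarrow> ('b \<Rightarrow> 'b \<Rightarrow> real \<Rightarrow> 'b) \<Rightarrow> bool" where
  "conical_bicombing_on Y d \<sigma> \<longleftrightarrow> bicombing_on Y d \<sigma> \<and>
     (\<forall>x\<in>Y. \<forall>y\<in>Y. \<forall>x'\<in>Y. \<forall>y'\<in>Y. \<forall>t\<in>{0..1}.
        d (\<sigma> x y t) (\<sigma> x' y' t) \<le> (1 - t) * d x x' + t * d y y')"

text \<open>A bicombing is a map on X \<times> X \<times> [0,1]; to represent it by a unique HOL
  function we require the value undefined for parameters outside [0,1].\<close>

definition CBI :: "('a::metric_space \<Rightarrow> 'a \<Rightarrow> real \<Rightarrow> 'a) set" where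
  "CBI = {\<sigma>. conical_bicombing_on UNIV dist \<sigma> \<and>
                (\<forall>x y t. t \<notin> {0..1} \<longrightarrow> \<sigma> x y t = undefined)}"

definition reversible :: "('a \<Rightarrow> 'a \<Rightarrow> real \<Rightarrow> 'a) \<Rightarrow> bool" where
  "reversible \<sigma> \<longleftrightarrow> (\<forall>x y. \<forall>t\<in>{0..1}. \<sigma> x y t = \<sigma> y x (1 - t))"

definition RCBI :: "('a::metric_space \<Rightarrow> 'a \<Rightarrow> real \<Rightarrow> 'a) set" where
  "RCBI = {\<sigma>\<in>CBI. reversible \<sigma>}"

text \<open>The metric D_o on CBI(X); B_r(o) is taken to be the closed ball.\<close>

definition D :: "'a::metric_space \<Rightarrow> ('a \<Rightarrow> 'a \<Rightarrow> real \<Rightarrow> 'a) \<Rightarrow> ('a \<Rightarrow> 'a \<Rightarrow> real \<Rightarrow> 'a) \<Rightarrow> real" where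
  "D p \<sigma> \<tau> = Sup {(1/3) ^ k * dist (\<sigma> x y t) (\<tau> x y t) | k x y t.
                      x \<in> cball p (2 ^ k) \<and> y \<in> cball p (2 ^ k) \<and> t \<in> {0..1}}"

definition convex_wrt :: "('c \<Rightarrow> 'c \<Rightarrow> real \<Rightarrow> 'c) \<Rightarrow> 'c set \<Rightarrow> bool" where
  "convex_wrt \<Phi> A \<longleftrightarrow> (\<forall>\<sigma>\<in>A. \<forall>\<tau>\<in>A. \<forall>t\<in>{0..1}. \<Phi> \<sigma> \<tau> t \<in> A)"

end

theory Submission
  imports Defs
begin

text \<open>The bicombing on CBI(X) is built pointwise from \<phi>: the geodesic of
  \<Phi>(\<sigma>, \<tau>, s) from x to y passes at time t through \<phi>(\<sigma>_xy(t), \<tau>_xy(t), s).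
  Since \<phi> is conical and \<sigma>_xy, \<tau>_xy are geodesics, this is a d(x,y)-Lipschitz
  path from x to y, hence a geodesic, and conicality of \<phi>, \<sigma>, \<tau> gives
  conicality of \<Phi>(\<sigma>, \<tau>, s). As D_o is a weighted supremum of pointwise
  distances, the geodesic identity and the conical inequality of \<phi> at each point
  lift to D_o. Reversibility of \<sigma> and \<tau> passes to \<Phi>(\<sigma>, \<tau>, s) pointwise.\<close>

lemma conical_bicombing_onD:
  assumes "conical_bicombing_on Y d \<sigma>" "x \<in> Y" "y \<in> Y"
  shows "\<sigma> x y 0 = x" "\<sigma> x y 1 = y"
    and "s \<in> {0..1} \<Longrightarrow> t \<in> {0..1} \<Longrightarrow> d (\<sigma> x y s) (\<sigma> x y t) = \<bar>s - t\<bar> * d x y"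
    and "x' \<in> Y \<Longrightarrow> y' \<in> Y \<Longrightarrow> t \<in> {0..1} \<Longrightarrow>
           d (\<sigma> x y t) (\<sigma> x' y' t) \<le> (1 - t) * d x x' + t * d y y'"
  using assms unfolding conical_bicombing_on_def bicombing_on_def geodesic_on_def by blast+

lemma conical_bicombing_on_constant:
  fixes \<phi> :: "'a::metric_space \<Rightarrow> 'a \<Rightarrow> real \<Rightarrow> 'a"
  assumes "conical_bicombing_on Y dist \<phi>" "x \<in> Y" "s \<in> {0..1}"
  shows "\<phi> x x s = x"
proof -
  have "dist (\<phi> x x s) (\<phi> x x 0) = 0"
    using conical_bicombing_onD(3)[OF assms(1,2,2) assms(3), of 0] by simp
  then show ?thesis using conical_bicombing_onD(1)[OF assms(1,2,2)] by simp
qed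

lemma CBI_D:
  fixes \<sigma> :: "'a::metric_space \<Rightarrow> 'a \<Rightarrow> real \<Rightarrow> 'a"
  assumes "\<sigma> \<in> CBI"
  shows "conical_bicombing_on UNIV dist \<sigma>" "t \<notin> {0..1} \<Longrightarrow> \<sigma> x y t = undefined"
  using assms unfolding CBI_def by auto

text \<open>By the triangle inequality through g a and g b, a d(x,y)-Lipschitz path from
  x to y cannot be shorter than a geodesic on any subinterval.\<close>

lemma lipschitz_path_is_geodesic:
  fixes g :: "real \<Rightarrow> 'a::metric_space"
  assumes g0: "g 0 = x" and g1: "g 1 = y"
    and lipschitz: "\<And>s t. s \<in> {0..1} \<Longrightarrow> t \<in> {0..1} \<Longrightarrow> dist (g s) (g t) \<le> \<bar>s - t\<bar> * dist x y"
  shows "geodesic_on UNIV dist x y g"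
proof -
  have ordered: "dist (g a) (g b) = \<bar>a - b\<bar> * dist x y"
    if a: "a \<in> {0..1}" and b: "b \<in> {0..1}" and "a \<le> b" for a b
  proof -
    have "dist x (g a) \<le> a * dist x y" using lipschitz[of 0 a] a g0 by auto
    moreover have "dist (g b) y \<le> (1 - b) * dist x y" using lipschitz[of b 1] b g1 by auto
    moreover have "dist x y \<le> dist x (g a) + dist (g a) (g b) + dist (g b) y"
      using dist_triangle[of x y "g a"] dist_triangle[of "g a" y "g b"] by linarith
    ultimately have "(b - a) * dist x y \<le> dist (g a) (g b)" by (simp add: algebra_simps)
    then show ?thesis using lipschitz[OF a b] \<open>a \<le> b\<close> by auto
  qed
  have isometric: "dist (g s) (g t) = \<bar>s - t\<bar> * dist x y" if "s \<in> {0..1}" "t \<in> {0..1}" for s t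
  proof (cases "s \<le> t")
    case True
    with ordered that show ?thesis by blast
  next
    case False
    then have "dist (g t) (g s) = \<bar>t - s\<bar> * dist x y" using ordered that by simp
    then show ?thesis by (simp add: dist_commute abs_minus_commute)
  qed
  show ?thesis unfolding geodesic_on_def by (simp add: g0 g1 isometric)
qed

definition weighted_dists :: "'a::metric_space \<Rightarrow> ('a \<Rightarrow> 'a \<Rightarrow> real \<Rightarrow> 'a) \<Rightarrow> ('a \<Rightarrow> 'a \<Rightarrow> real \<Rightarrow> 'a) \<Rightarrow> real set" where
  "weighted_dists p \<sigma> \<tau> = {(1/3) ^ k * dist (\<sigma> x y t) (\<tau> x y t) | k x y t.
                             x \<in> cball p (2 ^ k) \<and> y \<in> cball p (2 ^ k) \<and> t \<in> {0..1}}"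

lemma D_eq_Sup_weighted_dists: "D p \<sigma> \<tau> = Sup (weighted_dists p \<sigma> \<tau>)"
  unfolding D_def weighted_dists_def ..

lemma weighted_dists_nonempty: "weighted_dists p \<sigma> \<tau> \<noteq> {}"
  unfolding weighted_dists_def by (auto intro!: exI[of _ "0::nat"] exI[of _ p] exI[of _ "0::real"])

lemma dist_CBI_le:
  assumes "\<sigma> \<in> CBI" "\<tau> \<in> CBI" "t \<in> {0..1}"
  shows "dist (\<sigma> x y t) (\<tau> x y t) \<le> 2 * dist x y"
proof -
  note \<sigma> = conical_bicombing_onD[OF CBI_D(1)[OF assms(1)] UNIV_I UNIV_I]
  note \<tau> = conical_bicombing_onD[OF CBI_D(1)[OF assms(2)] UNIV_I UNIV_I]
  have "dist (\<sigma> x y t) (\<tau> x y t) \<le> dist (\<sigma> x y t) (\<sigma> x y 0) + dist (\<tau> x y t) (\<tau> x y 0)"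
    using \<sigma>(1) \<tau>(1) by (metis dist_commute dist_triangle)
  also have "\<dots> = 2 * t * dist x y"
    using \<sigma>(3)[OF assms(3), of 0] \<tau>(3)[OF assms(3), of 0] assms(3) by auto
  also have "\<dots> \<le> 2 * dist x y" using assms(3) by (simp add: mult_left_le_one_le)
  finally show ?thesis .
qed

lemma bdd_above_weighted_dists:
  assumes "\<sigma> \<in> CBI" "\<tau> \<in> CBI"
  shows "bdd_above (weighted_dists p \<sigma> \<tau>)"
proof (rule bdd_aboveI)
  fix r assume "r \<in> weighted_dists p \<sigma> \<tau>"
  then obtain k x y t where r: "r = (1/3) ^ k * dist (\<sigma> x y t) (\<tau> x y t)"
    and x: "x \<in> cball p (2 ^ k)" and y: "y \<in> cball p (2 ^ k)" and t: "t \<in> {0..1}"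
    unfolding weighted_dists_def by blast
  have "dist (\<sigma> x y t) (\<tau> x y t) \<le> 2 * dist x y" by (rule dist_CBI_le[OF assms t])
  also have "\<dots> \<le> 2 * (dist p x + dist p y)" using dist_triangle3[of x y p] by simp
  also have "\<dots> \<le> 4 * 2 ^ k" using x y by simp
  finally have "r \<le> (1/3) ^ k * (4 * 2 ^ k)" unfolding r by (simp add: mult_left_mono)
  also have "\<dots> = 4 * (2/3) ^ k" by (simp add: power_divide)
  also have "\<dots> \<le> 4" by (simp add: power_le_one)
  finally show "r \<le> 4" .
qed

lemma D_leI:
  assumes "\<And>k x y t. x \<in> cball p (2 ^ k) \<Longrightarrow> y \<in> cball p (2 ^ k) \<Longrightarrow> t \<in> {0..1} \<Longrightarrow>
             (1/3) ^ k * dist (\<sigma> x y t) (\<tau> x y t) \<le> B"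
  shows "D p \<sigma> \<tau> \<le> B"
  unfolding D_eq_Sup_weighted_dists
  by (rule cSup_least[OF weighted_dists_nonempty]) (auto simp: weighted_dists_def intro: assms)

lemma weighted_dist_le_D:
  assumes "\<sigma> \<in> CBI" "\<tau> \<in> CBI" "x \<in> cball p (2 ^ k)" "y \<in> cball p (2 ^ k)" "t \<in> {0..1}"
  shows "(1/3) ^ k * dist (\<sigma> x y t) (\<tau> x y t) \<le> D p \<sigma> \<tau>"
  unfolding D_eq_Sup_weighted_dists
  by (rule cSup_upper[OF _ bdd_above_weighted_dists[OF assms(1,2)]])
     (use assms(3-5) in \<open>auto simp: weighted_dists_def\<close>)

lemma D_nonneg:
  assumes "\<sigma> \<in> CBI" "\<tau> \<in> CBI"
  shows "0 \<le> D p \<sigma> \<tau>"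
  using weighted_dist_le_D[OF assms, where p = p and k = 0 and x = p and y = p and t = 0]
  by (simp add: order_trans[OF zero_le_dist])

lemma D_le_lincomb:
  fixes \<alpha> \<beta> :: "'a::metric_space \<Rightarrow> 'a \<Rightarrow> real \<Rightarrow> 'a"
  assumes "\<sigma> \<in> CBI" "\<sigma>' \<in> CBI" "\<tau> \<in> CBI" "\<tau>' \<in> CBI" "0 \<le> u" "0 \<le> v"
    and pointwise: "\<And>x y t. t \<in> {0..1} \<Longrightarrow>
      dist (\<alpha> x y t) (\<beta> x y t) \<le> u * dist (\<sigma> x y t) (\<sigma>' x y t) + v * dist (\<tau> x y t) (\<tau>' x y t)"
  shows "D p \<alpha> \<beta> \<le> u * D p \<sigma> \<sigma>' + v * D p \<tau> \<tau>'"
proof (rule D_leI)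
  fix k x y and t :: real
  assume ball: "x \<in> cball p (2 ^ k)" "y \<in> cball p (2 ^ k)" and t: "t \<in> {0..1}"
  have "(1/3) ^ k * dist (\<alpha> x y t) (\<beta> x y t)
      \<le> u * ((1/3) ^ k * dist (\<sigma> x y t) (\<sigma>' x y t)) + v * ((1/3) ^ k * dist (\<tau> x y t) (\<tau>' x y t))"
    using mult_left_mono[OF pointwise[OF t], of "(1/3) ^ k"] by (simp add: algebra_simps)
  also have "\<dots> \<le> u * D p \<sigma> \<sigma>' + v * D p \<tau> \<tau>'"
    using weighted_dist_le_D[OF assms(1,2) ball t] weighted_dist_le_D[OF assms(3,4) ball t] assms(5,6)
    by (intro add_mono mult_left_mono)
  finally show "(1/3) ^ k * dist (\<alpha> x y t) (\<beta> x y t) \<le> u * D p \<sigma> \<sigma>' + v * D p \<tau> \<tau>'" .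
qed

lemma D_le_scaled:
  fixes \<alpha> \<beta> :: "'a::metric_space \<Rightarrow> 'a \<Rightarrow> real \<Rightarrow> 'a"
  assumes "\<sigma> \<in> CBI" "\<tau> \<in> CBI" "0 \<le> u"
    and "\<And>x y t. t \<in> {0..1} \<Longrightarrow> dist (\<alpha> x y t) (\<beta> x y t) \<le> u * dist (\<sigma> x y t) (\<tau> x y t)"
  shows "D p \<alpha> \<beta> \<le> u * D p \<sigma> \<tau>"
proof -
  have "D p \<alpha> \<beta> \<le> u * D p \<sigma> \<tau> + 0 * D p \<sigma> \<sigma>"
    by (rule D_le_lincomb) (use assms in simp_all)
  then show ?thesis by simp
qed

text \<open>The value undefined outside [0,1] is forced by the normalisation in CBI.\<close>

definition lift_bicombing ::
    "('a \<Rightarrow> 'a \<Rightarrow> real \<Rightarrow> 'a) \<Rightarrow> ('a \<Rightarrow> 'a \<Rightarrow> real \<Rightarrow> 'a) \<Rightarrow> ('a \<Rightarrow> 'a \<Rightarrow> real \<Rightarrow> 'a) \<Rightarrow> real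
       \<Rightarrow> ('a \<Rightarrow> 'a \<Rightarrow> real \<Rightarrow> 'a)" where
  "lift_bicombing \<phi> \<sigma> \<tau> s = (\<lambda>x y t. if t \<in> {0..1} then \<phi> (\<sigma> x y t) (\<tau> x y t) s else undefined)"

context
  fixes \<phi> :: "'a::metric_space \<Rightarrow> 'a \<Rightarrow> real \<Rightarrow> 'a"
  assumes \<phi>: "conical_bicombing_on UNIV dist \<phi>"
begin

lemma geodesic_lift_bicombing:
  assumes "\<sigma> \<in> CBI" "\<tau> \<in> CBI" and s: "s \<in> {0..1}"
  shows "geodesic_on UNIV dist x y (lift_bicombing \<phi> \<sigma> \<tau> s x y)"
proof -
  note \<sigma> = conical_bicombing_onD[OF CBI_D(1)[OF assms(1)] UNIV_I UNIV_I]
  note \<tau> = conical_bicombing_onD[OF CBI_D(1)[OF assms(2)] UNIV_I UNIV_I]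
  show ?thesis
  proof (rule lipschitz_path_is_geodesic)
    show "lift_bicombing \<phi> \<sigma> \<tau> s x y 0 = x" "lift_bicombing \<phi> \<sigma> \<tau> s x y 1 = y"
      using \<sigma>(1,2) \<tau>(1,2) conical_bicombing_on_constant[OF \<phi> UNIV_I s]
      by (simp_all add: lift_bicombing_def)
  next
    fix a b :: real assume a: "a \<in> {0..1}" and b: "b \<in> {0..1}"
    have "dist (lift_bicombing \<phi> \<sigma> \<tau> s x y a) (lift_bicombing \<phi> \<sigma> \<tau> s x y b)
        \<le> (1 - s) * dist (\<sigma> x y a) (\<sigma> x y b) + s * dist (\<tau> x y a) (\<tau> x y b)"
      using conical_bicombing_onD(4)[OF \<phi> UNIV_I UNIV_I UNIV_I UNIV_I s] a b
      by (simp add: lift_bicombing_def)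
    also have "\<dots> = \<bar>a - b\<bar> * dist x y"
      using \<sigma>(3)[OF a b] \<tau>(3)[OF a b] by (simp add: algebra_simps)
    finally show "dist (lift_bicombing \<phi> \<sigma> \<tau> s x y a) (lift_bicombing \<phi> \<sigma> \<tau> s x y b)
        \<le> \<bar>a - b\<bar> * dist x y" .
  qed
qed

lemma dist_lift_bicombing_conical:
  assumes "\<sigma> \<in> CBI" "\<tau> \<in> CBI" and s: "s \<in> {0..1}" and t: "t \<in> {0..1}"
  shows "dist (lift_bicombing \<phi> \<sigma> \<tau> s x y t) (lift_bicombing \<phi> \<sigma> \<tau> s x' y' t)
           \<le> (1 - t) * dist x x' + t * dist y y'"
proof -
  note \<sigma> = conical_bicombing_onD(4)[OF CBI_D(1)[OF assms(1)] UNIV_I UNIV_I UNIV_I UNIV_I t]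
  note \<tau> = conical_bicombing_onD(4)[OF CBI_D(1)[OF assms(2)] UNIV_I UNIV_I UNIV_I UNIV_I t]
  have "dist (lift_bicombing \<phi> \<sigma> \<tau> s x y t) (lift_bicombing \<phi> \<sigma> \<tau> s x' y' t)
      \<le> (1 - s) * dist (\<sigma> x y t) (\<sigma> x' y' t) + s * dist (\<tau> x y t) (\<tau> x' y' t)"
    using conical_bicombing_onD(4)[OF \<phi> UNIV_I UNIV_I UNIV_I UNIV_I s] t
    by (simp add: lift_bicombing_def)
  also have "\<dots> \<le> (1 - s) * ((1 - t) * dist x x' + t * dist y y')
                + s * ((1 - t) * dist x x' + t * dist y y')"
    using \<sigma> \<tau> s by (intro add_mono mult_left_mono) auto
  also have "\<dots> = (1 - t) * dist x x' + t * dist y y'" by (simp add: algebra_simps)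
  finally show ?thesis .
qed

lemma lift_bicombing_in_CBI:
  assumes "\<sigma> \<in> CBI" "\<tau> \<in> CBI" "s \<in> {0..1}"
  shows "lift_bicombing \<phi> \<sigma> \<tau> s \<in> CBI"
proof -
  have "lift_bicombing \<phi> \<sigma> \<tau> s x y t = undefined" if "t \<notin> {0..1}" for x y t
    using that by (simp add: lift_bicombing_def del: atLeastAtMost_iff)
  then show ?thesis
    using geodesic_lift_bicombing[OF assms] dist_lift_bicombing_conical[OF assms]
    unfolding CBI_def conical_bicombing_on_def bicombing_on_def by simp
qed

lemma lift_bicombing_0:
  assumes "\<sigma> \<in> CBI"
  shows "lift_bicombing \<phi> \<sigma> \<tau> 0 = \<sigma>"
  using conical_bicombing_onD(1)[OF \<phi> UNIV_I UNIV_I] CBI_D(2)[OF assms]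
  by (simp add: lift_bicombing_def fun_eq_iff)

lemma lift_bicombing_1:
  assumes "\<tau> \<in> CBI"
  shows "lift_bicombing \<phi> \<sigma> \<tau> 1 = \<tau>"
  using conical_bicombing_onD(2)[OF \<phi> UNIV_I UNIV_I] CBI_D(2)[OF assms]
  by (simp add: lift_bicombing_def fun_eq_iff)

lemma D_lift_bicombing:
  assumes \<sigma>: "\<sigma> \<in> CBI" and \<tau>: "\<tau> \<in> CBI" and a: "a \<in> {0..1}" and b: "b \<in> {0..1}"
  shows "D p (lift_bicombing \<phi> \<sigma> \<tau> a) (lift_bicombing \<phi> \<sigma> \<tau> b) = \<bar>a - b\<bar> * D p \<sigma> \<tau>"
proof -
  have pointwise: "dist (lift_bicombing \<phi> \<sigma> \<tau> a x y t) (lift_bicombing \<phi> \<sigma> \<tau> b x y t)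
      = \<bar>a - b\<bar> * dist (\<sigma> x y t) (\<tau> x y t)" if "t \<in> {0..1}" for x y t
    using conical_bicombing_onD(3)[OF \<phi> UNIV_I UNIV_I a b] that by (simp add: lift_bicombing_def)
  have lifts: "lift_bicombing \<phi> \<sigma> \<tau> a \<in> CBI" "lift_bicombing \<phi> \<sigma> \<tau> b \<in> CBI"
    using lift_bicombing_in_CBI[OF \<sigma> \<tau>] a b by auto
  have le: "D p (lift_bicombing \<phi> \<sigma> \<tau> a) (lift_bicombing \<phi> \<sigma> \<tau> b) \<le> \<bar>a - b\<bar> * D p \<sigma> \<tau>"
    by (rule D_le_scaled[OF \<sigma> \<tau>]) (simp_all add: pointwise)
  show ?thesis
  proof (cases "a = b")
    case True
    then show ?thesis using le D_nonneg[OF lifts, of p] by simp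
  next
    case False
    then have "D p \<sigma> \<tau> \<le> 1 / \<bar>a - b\<bar> * D p (lift_bicombing \<phi> \<sigma> \<tau> a) (lift_bicombing \<phi> \<sigma> \<tau> b)"
      by (intro D_le_scaled[OF lifts]) (simp_all add: pointwise)
    with False le show ?thesis by (simp add: field_simps)
  qed
qed

lemma D_lift_bicombing_conical:
  assumes "\<sigma> \<in> CBI" "\<tau> \<in> CBI" "\<sigma>' \<in> CBI" "\<tau>' \<in> CBI" and s: "s \<in> {0..1}"
  shows "D p (lift_bicombing \<phi> \<sigma> \<tau> s) (lift_bicombing \<phi> \<sigma>' \<tau>' s)
           \<le> (1 - s) * D p \<sigma> \<sigma>' + s * D p \<tau> \<tau>'"
  using assms conical_bicombing_onD(4)[OF \<phi> UNIV_I UNIV_I UNIV_I UNIV_I s]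
  by (intro D_le_lincomb) (auto simp: lift_bicombing_def)

lemma conical_bicombing_on_CBI_lift_bicombing:
  "conical_bicombing_on CBI (D p) (lift_bicombing \<phi>)"
  unfolding conical_bicombing_on_def bicombing_on_def geodesic_on_def
  by (intro conjI ballI)
     (simp_all add: lift_bicombing_0 lift_bicombing_1 lift_bicombing_in_CBI D_lift_bicombing
                    D_lift_bicombing_conical)

end

lemma reversible_lift_bicombing:
  assumes "reversible \<sigma>" "reversible \<tau>"
  shows "reversible (lift_bicombing \<phi> \<sigma> \<tau> s)"
  unfolding reversible_def
proof (intro allI ballI)
  fix x y and t :: real
  assume t: "t \<in> {0..1}"
  then have "\<sigma> x y t = \<sigma> y x (1 - t)" "\<tau> x y t = \<tau> y x (1 - t)"
    using assms unfolding reversible_def by blast+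
  with t show "lift_bicombing \<phi> \<sigma> \<tau> s x y t = lift_bicombing \<phi> \<sigma> \<tau> s y x (1 - t)"
    by (simp add: lift_bicombing_def)
qed

lemma convex_wrt_RCBI_lift_bicombing:
  assumes "conical_bicombing_on UNIV dist \<phi>"
  shows "convex_wrt (lift_bicombing \<phi>) RCBI"
  unfolding convex_wrt_def RCBI_def
  using lift_bicombing_in_CBI[OF assms] reversible_lift_bicombing by blast

theorem lemma4p2:
  fixes p :: "'a::metric_space"
  assumes "\<exists>\<phi> :: 'a \<Rightarrow> 'a \<Rightarrow> real \<Rightarrow> 'a. conical_bicombing_on UNIV dist \<phi>"
  shows "\<exists>\<Phi>. conical_bicombing_on (CBI :: ('a \<Rightarrow> 'a \<Rightarrow> real \<Rightarrow> 'a) set) (D p) \<Phi>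
              \<and> convex_wrt \<Phi> (RCBI :: ('a \<Rightarrow> 'a \<Rightarrow> real \<Rightarrow> 'a) set)"
proof -
  obtain \<phi> :: "'a \<Rightarrow> 'a \<Rightarrow> real \<Rightarrow> 'a" where "conical_bicombing_on UNIV dist \<phi>"
    using assms by blast
  then show ?thesis
    using conical_bicombing_on_CBI_lift_bicombing convex_wrt_RCBI_lift_bicombing by blast
qed

end
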